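(* For every partition $\lambda$, the dual equivalence graph $\mathsf{DE}(\lambda)$ is a subgraph of the crystal skeleton $\mathsf{CS}(\lambda)$, when edge labels and edge directions are disregarded.
   Context: French notation for tableaux; $|\lambda|=N$; $\mathsf{SYT}(\lambda)$ = standard Young tableaux of shape $\lambda$; $\mathsf{SSYT}(\lambda)_n$ = semistandard tableaux with entries in $[n]$. The reading word $\mathsf{row}(b)$ reads rows left to right from the top row down to the bottom row. The standardization $\mathsf{std}(b)$ replaces the $a_j$ entries equal to $j$, in reading order, by $a_1+\dots+a_{j-1}+1,\dots,a_1+\dots+a_j$. Crystal operators on $B(\lambda)_n=\mathsf{SSYT}(\lambda)_n$: in the subword of $\mathsf{row}(b)$ of letters $i,i+1$, bracket each $i+1$ with an unbracketed $i$ to its right (parenthesis matching, $i+1$ opening); the unbracketed letters form $i^r(i+1)^s$; $f_i$ changes the rightmost unbracketed $i$ to $i+1$ ($\emptyset$ if $r=0$). Fix $n\ge N$; for $T\in\mathsf{SYT}(\lambda)$ let $Q_T=\{b:\mathsf{std}(b)=T\}$. The crystal skeleton $\mathsf{CS}(\lambda)$ is the directed graph on $\mathsf{SYT}(\lambda)$ with an edge $T\to T'$ ($T\neq T'$) whenever $f_i(b)=b'$ for some $b\in Q_T$, $b'\in Q_{T'}$, $i$. The dual equivalence graph $\mathsf{DE}(\lambda)$ has vertex set $\mathsf{SYT}(\lambda)$ and an edge between $T$ and $T'$ whenever $T'=D_i(T)$ for some $1<i<N$, where $D_i$ acts on the permutation $\mathsf{row}(T)$ as follows: if the letters $i-1,i,i+1$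 occur in the relative order $i,\,i+1,\,i-1$ it swaps them to the order $i-1,\,i+1,\,i$ (and conversely), and if they occur in the order $i,\,i-1,\,i+1$ it swaps to $i+1,\,i-1,\,i$ (and conversely), i.e. $D_i$ interchanges $i$ with whichever of $i\pm1$ is farther from it in position-order as listed; $D_i$ is undefined for the other relative orders. (Explicitly: $\ldots i\ldots i{+}1\ldots i{-}1\ldots \leftrightarrow \ldots i{-}1\ldots i{+}1\ldots i\ldots$ and $\ldots i\ldots i{-}1\ldots i{+}1\ldots\leftrightarrow\ldots i{+}1\ldots i{-}1\ldots i\ldots$.) This preserves descents, so it defines an operation on standard tableaux via reading words. *)

theory Defs
  imports Main
begin

(* Partitions: weakly decreasing lists of positive naturals (row lengths, bottom row first). *)
definition is_partition :: "nat list \<Rightarrow> bool" where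
  "is_partition la \<longleftrightarrow> sorted (rev la) \<and> (\<forall>x\<in>set la. 0 < x)"

definition psize :: "nat list \<Rightarrow> nat" where
  "psize la = sum_list la"

(* Tableaux in French notation: a list of rows, row 0 is the bottom (longest) row. *)
type_synonym tableau = "nat list list"

definition row_word :: "tableau \<Rightarrow> nat list" where
  "row_word T = concat (rev T)"

definition has_shape :: "nat list \<Rightarrow> tableau \<Rightarrow> bool" where
  "has_shape la T \<longleftrightarrow> map length T = la"

definition is_SSYT :: "nat list \<Rightarrow> nat \<Rightarrow> tableau \<Rightarrow> bool" where
  "is_SSYT la n T \<longleftrightarrow> has_shape la T
     \<and> (\<forall>r\<in>set T. sorted r)
     \<and> (\<forall>i j. Suc i < length T \<longrightarrow> j < length (T ! Suc i) \<longrightarrow> T ! i ! j < T ! Suc i ! j)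
     \<and> set (concat T) \<subseteq> {1..n}"

definition is_SYT :: "nat list \<Rightarrow> tableau \<Rightarrow> bool" where
  "is_SYT la T \<longleftrightarrow> has_shape la T
     \<and> (\<forall>r\<in>set T. sorted_wrt (<) r)
     \<and> (\<forall>i j. Suc i < length T \<longrightarrow> j < length (T ! Suc i) \<longrightarrow> T ! i ! j < T ! Suc i ! j)
     \<and> distinct (concat T) \<and> set (concat T) = {1..psize la}"

(* Standardization of a word: the entries equal to j, in order, are replaced by
   a_1+...+a_{j-1}+1, ..., a_1+...+a_j. *)
definition std_word :: "nat list \<Rightarrow> nat list" where
  "std_word w = map (\<lambda>p. card {q. q < length w \<and> w ! q < w ! p}
                         + card {q. q < p \<and> w ! q = w ! p} + 1) [0..<length w]"

(* std(b) = T  (for b, T of the same shape) iff row(T) = std(row(b)) *)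
definition Q_set :: "nat list \<Rightarrow> nat \<Rightarrow> tableau \<Rightarrow> tableau set" where
  "Q_set la n T = {b. is_SSYT la n b \<and> row_word T = std_word (row_word b)}"

(* Positions of unbracketed letters i in a word (i+1 opens, i closes), scanning left to right
   with k currently unmatched (i+1)'s, p = current position. *)
fun unbr :: "nat \<Rightarrow> nat \<Rightarrow> nat \<Rightarrow> nat list \<Rightarrow> nat list" where
  "unbr i k p [] = []"
| "unbr i k p (x # xs) =
     (if x = Suc i then unbr i (Suc k) (Suc p) xs
      else if x = i then (if 0 < k then unbr i (k - 1) (Suc p) xs else p # unbr i k (Suc p) xs)
      else unbr i k (Suc p) xs)"

definition f_word :: "nat \<Rightarrow> nat list \<Rightarrow> nat list option" where
  "f_word i w = (let U = unbr i 0 0 w in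
                  if U = [] then None else Some (w[last U := Suc i]))"

definition crystal_f :: "nat \<Rightarrow> nat \<Rightarrow> tableau \<Rightarrow> tableau \<Rightarrow> bool" where
  "crystal_f n i b b' \<longleftrightarrow> 1 \<le> i \<and> i < n \<and> f_word i (row_word b) = Some (row_word b')"

definition CS_edge :: "nat list \<Rightarrow> nat \<Rightarrow> tableau \<Rightarrow> tableau \<Rightarrow> bool" where
  "CS_edge la n T T' \<longleftrightarrow> is_SYT la T \<and> is_SYT la T' \<and> T \<noteq> T'
     \<and> (\<exists>i b b'. b \<in> Q_set la n T \<and> b' \<in> Q_set la n T' \<and> crystal_f n i b b')"

definition pos_of :: "nat list \<Rightarrow> nat \<Rightarrow> nat" where
  "pos_of w x = (LEAST p. p < length w \<and> w ! p = x)"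

definition swap_vals :: "nat \<Rightarrow> nat \<Rightarrow> nat list \<Rightarrow> nat list" where
  "swap_vals a c w = map (\<lambda>x. if x = a then c else if x = c then a else x) w"

definition between :: "nat \<Rightarrow> nat \<Rightarrow> nat \<Rightarrow> bool" where
  "between x y z \<longleftrightarrow> (x < y \<and> y < z) \<or> (z < y \<and> y < x)"

definition D_word :: "nat \<Rightarrow> nat list \<Rightarrow> nat list option" where
  "D_word i w =
    (let pa = pos_of w (i - 1); pb = pos_of w i; pc = pos_of w (Suc i) in
     if between pb pc pa then Some (swap_vals (i - 1) i w)
     else if between pb pa pc then Some (swap_vals i (Suc i) w)
     else None)"

definition DE_edge :: "nat list \<Rightarrow> tableau \<Rightarrow> tableau \<Rightarrow> bool" where
  "DE_edge la T T' \<longleftrightarrow> is_SYT la T \<and> is_SYT la T'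
     \<and> (\<exists>i. 1 < i \<and> i < psize la \<and> D_word i (row_word T) = Some (row_word T'))"

end

theory Submission
  imports Defs
begin

text \<open>
  Let \<open>D\<^sub>i\<close> exchange \<open>T\<close> and \<open>T'\<close>, and put \<open>a = i - 1\<close>. Up to exchanging the two
  tableaux, the reading word of \<open>T\<close> contains \<open>a, a+1, a+2\<close> in the order \<open>a, a+2, a+1\<close> (and
  \<open>D\<^sub>i\<close> swaps \<open>a, a+1\<close>) or \<open>a+2, a, a+1\<close> (and \<open>D\<^sub>i\<close> swaps \<open>a+1, a+2\<close>). In both
  cases \<open>a\<close> precedes \<open>a+1\<close> in \<open>row(T)\<close>, so relabelling \<open>a+1\<close> as \<open>a\<close> (and lowering
  all larger entries by one) yields a semistandard \<open>b\<close> with \<open>std(b) = T\<close>; likewise \<open>a+1\<close>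
  precedes \<open>a+2\<close> in \<open>row(T')\<close>, and relabelling \<open>a+2\<close> as \<open>a+1\<close> yields \<open>b'\<close> with
  \<open>std(b') = T'\<close>. The letters \<open>a, a+1\<close> of \<open>b\<close> read \<open>a (a+1) a\<close>, resp. \<open>(a+1) a a\<close>:
  the \<open>a+1\<close> brackets the second \<open>a\<close>, resp. the first, so \<open>f\<^sub>a\<close> raises the remaining
  one, and the result is exactly \<open>b'\<close>. Hence \<open>T \<rightarrow> T'\<close> in the crystal skeleton.
\<close>

text \<open>The condition under which standardization undoes the relabelling \<open>f\<close>.\<close>

definition ties_in_order :: "(nat \<Rightarrow> nat) \<Rightarrow> nat list \<Rightarrow> bool" where
  "ties_in_order f w \<longleftrightarrow> (\<forall>p q. p < length w \<longrightarrow> q < length w \<longrightarrow>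
     w ! p < w ! q \<longrightarrow> f (w ! p) = f (w ! q) \<longrightarrow> p < q)"

lemma std_word_map:
  assumes f: "mono f" and ties: "ties_in_order f w"
  shows "std_word (map f w) = std_word w"
proof (rule nth_equalityI)
  show "length (std_word (map f w)) = length (std_word w)" by (simp add: std_word_def)
next
  fix p assume "p < length (std_word (map f w))"
  hence p: "p < length w" by (simp add: std_word_def)
  let ?v = "w ! p"
  define A where "A g = {q. q < length w \<and> g (w ! q) < g ?v}" for g :: "nat \<Rightarrow> nat"
  define B where "B g = {q. q < p \<and> g (w ! q) = g ?v}" for g :: "nat \<Rightarrow> nat"
  have card_A_B: "card (A g \<union> B g) = card (A g) + card (B g)" for g
    unfolding A_def B_def by (intro card_Un_disjoint) auto
  have "A f \<union> B f = A id \<union> B id"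
  proof -
    have "w ! q < ?v" if "f (w ! q) < f ?v" for q
      using that monoD[OF f, of ?v "w ! q"] by (meson not_le)
    moreover have "q < p" if "q < length w" "w ! q < ?v" "f (w ! q) = f ?v" for q
      using ties that p unfolding ties_in_order_def by blast
    moreover have "\<not> ?v < w ! q" if "q < p" "f (w ! q) = f ?v" for q
    proof
      assume "?v < w ! q"
      moreover have "q < length w" using that p by simp
      ultimately have "p < q" using ties p that(2) unfolding ties_in_order_def by fastforce
      with that(1) show False by simp
    qed
    moreover have "f (w ! q) < f ?v \<or> f (w ! q) = f ?v" if "w ! q < ?v" for q
      using that monoD[OF f, of "w ! q" ?v] by auto
    ultimately show ?thesis using p by (auto simp: A_def B_def linorder_neq_iff)
  qed
  then have "card (A f) + card (B f) = card (A id) + card (B id)"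
    by (metis card_A_B)
  moreover have "{q. q < length w \<and> map f w ! q < f ?v} = A f"
    "{q. q < p \<and> map f w ! q = f ?v} = B f"
    using p by (auto simp: A_def B_def)
  ultimately show "std_word (map f w) ! p = std_word w ! p"
    using p by (simp add: std_word_def A_def B_def)
qed

lemma std_word_permutation:
  assumes d: "distinct w" and s: "set w = {1..length w}"
  shows "std_word w = w"
proof (rule nth_equalityI)
  show "length (std_word w) = length w" by (simp add: std_word_def)
next
  fix p assume "p < length (std_word w)"
  hence p: "p < length w" by (simp add: std_word_def)
  have "card {q. q < length w \<and> w ! q < w ! p} = length (filter (\<lambda>u. u < w ! p) w)"
    by (simp add: length_filter_conv_card)
  also have "\<dots> = card ({u. u < w ! p} \<inter> set w)"
    using distinct_length_filter[OF d] by simp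
  also have "{u. u < w ! p} \<inter> set w = {1..<w ! p}"
    using s p nth_mem[OF p] by auto
  finally have lower: "card {q. q < length w \<and> w ! q < w ! p} = w ! p - 1" by simp
  have "{q. q < p \<and> w ! q = w ! p} = {}"
    using d p nth_eq_iff_index_eq by fastforce
  moreover have "1 \<le> w ! p" using s p nth_mem by fastforce
  ultimately show "std_word w ! p = w ! p" using p lower by (simp add: std_word_def)
qed

lemma SYT_row_word:
  assumes "is_SYT la S"
  shows "distinct (row_word S)" "set (row_word S) = {1..psize la}" "length (row_word S) = psize la"
proof -
  show d: "distinct (row_word S)" and s: "set (row_word S) = {1..psize la}"
    using assms by (simp_all add: is_SYT_def row_word_def)
  show "length (row_word S) = psize la" using distinct_card[OF d] s by simp
qed

lemma row_word_map_map: "row_word (map (map f) S) = map f (row_word S)"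
  by (simp add: row_word_def map_concat rev_map)

lemma in_set_append_positions:
  assumes "x \<in> set xs" and "y \<in> set ys"
  shows "\<exists>p q. p < q \<and> q < length (xs @ ys) \<and> (xs @ ys) ! p = x \<and> (xs @ ys) ! q = y"
proof -
  obtain p where "p < length xs" "xs ! p = x" using assms(1) by (auto simp: in_set_conv_nth)
  moreover obtain q where "q < length ys" "ys ! q = y" using assms(2) by (auto simp: in_set_conv_nth)
  ultimately show ?thesis
    by (intro exI[of _ p] exI[of _ "length xs + q"]) (auto simp: nth_append)
qed

lemma row_word_upper_row_first:
  assumes "Suc i < length S" and "x \<in> set (S ! Suc i)" and "y \<in> set (S ! i)"
  shows "\<exists>p q. p < q \<and> q < length (row_word S) \<and> row_word S ! p = x \<and> row_word S ! q = y"
proof -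
  have "row_word S = concat (rev (drop (Suc i) S)) @ concat (rev (take (Suc i) S))"
    by (metis append_take_drop_id concat_append rev_append row_word_def)
  moreover have "S ! Suc i \<in> set (drop (Suc i) S)"
    using assms(1) by (metis Cons_nth_drop_Suc list.set_intros(1))
  moreover have "S ! i \<in> set (take (Suc i) S)"
    using assms(1) by (simp add: take_Suc_conv_app_nth)
  ultimately show ?thesis
    using in_set_append_positions assms(2,3) by (metis set_concat set_rev UN_I)
qed

lemma is_SSYT_map_map:
  assumes la: "is_partition la" and S: "is_SYT la S" and f: "mono f"
    and range: "f ` {1..psize la} \<subseteq> {1..n}" and ties: "ties_in_order f (row_word S)"
  shows "is_SSYT la n (map (map f) S)"
  unfolding is_SSYT_def
proof (intro conjI allI impI)
  show "has_shape la (map (map f) S)"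
    using S by (simp add: is_SYT_def has_shape_def comp_def)
  show "\<forall>r\<in>set (map (map f) S). sorted r"
  proof
    fix r assume "r \<in> set (map (map f) S)"
    then obtain r0 where "r0 \<in> set S" and r: "r = map f r0" by auto
    then have "sorted r0" using S by (simp add: is_SYT_def strict_sorted_imp_sorted)
    then show "sorted r" unfolding r by (rule sorted_map_mono[OF _ mono_imp_mono_on[OF f]])
  qed
  have "set (concat (map (map f) S)) = f ` set (concat S)"
    by (metis map_concat set_map)
  then show "set (concat (map (map f) S)) \<subseteq> {1..n}"
    using S range by (simp add: is_SYT_def)
next
  fix i j assume i: "Suc i < length (map (map f) S)" and j: "j < length (map (map f) S ! Suc i)"
  have shape: "map length S = la" using S by (simp add: is_SYT_def has_shape_def)
  have "la ! Suc i \<le> la ! i"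
    using la i shape by (auto simp: is_partition_def intro: sorted_rev_nth_mono)
  then have j': "j < length (S ! i)" using i j shape by auto
  have lt: "S ! i ! j < S ! Suc i ! j" using S i j by (auto simp: is_SYT_def)
  obtain p q where "p < q" "q < length (row_word S)"
    "row_word S ! p = S ! Suc i ! j" "row_word S ! q = S ! i ! j"
    using row_word_upper_row_first[of i S "S ! Suc i ! j" "S ! i ! j"] i j j' by auto
  with ties lt have "f (S ! i ! j) \<noteq> f (S ! Suc i ! j)"
    unfolding ties_in_order_def by (metis less_asym less_trans)
  moreover have "f (S ! i ! j) \<le> f (S ! Suc i ! j)" using monoD[OF f] lt by simp
  ultimately show "map (map f) S ! i ! j < map (map f) S ! Suc i ! j" using i j j' by simp
qed

lemma map_map_in_Q_set:
  assumes "is_partition la" and S: "is_SYT la S" and f: "mono f"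
    and "f ` {1..psize la} \<subseteq> {1..n}" and ties: "ties_in_order f (row_word S)"
  shows "map (map f) S \<in> Q_set la n S"
proof -
  have "std_word (row_word (map (map f) S)) = std_word (row_word S)"
    using std_word_map[OF f ties] by (simp add: row_word_map_map)
  also have "\<dots> = row_word S"
    using SYT_row_word[OF S] by (intro std_word_permutation) simp_all
  finally show ?thesis
    using is_SSYT_map_map[OF assms] by (simp add: Q_set_def)
qed

definition merge_succ :: "nat \<Rightarrow> nat \<Rightarrow> nat" where
  "merge_succ a v = (if v \<le> a then v else v - 1)"

lemma mono_merge_succ: "mono (merge_succ a)"
  unfolding mono_def merge_succ_def by auto

lemma merge_succ_eq_self_iff [simp]: "merge_succ a v = a \<longleftrightarrow> v = a \<or> v = Suc a"
  unfolding merge_succ_def by auto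

lemma merge_succ_eq_Suc_iff [simp]: "merge_succ a v = Suc a \<longleftrightarrow> v = Suc (Suc a)"
  unfolding merge_succ_def by auto

lemma merge_succ_image_atLeastAtMost:
  "1 \<le> a \<Longrightarrow> N \<le> n \<Longrightarrow> merge_succ a ` {1..N} \<subseteq> {1..n}"
  unfolding merge_succ_def by auto

lemma ties_in_order_merge_succ:
  assumes "distinct w" and "p < q" and "q < length w" and "w ! p = a" and "w ! q = Suc a"
  shows "ties_in_order (merge_succ a) w"
  unfolding ties_in_order_def
proof (intro allI impI)
  fix p' q' assume "p' < length w" "q' < length w" "w ! p' < w ! q'"
    "merge_succ a (w ! p') = merge_succ a (w ! q')"
  then have "w ! p' = a" "w ! q' = Suc a" "p' < length w" "q' < length w"
    by (auto simp: merge_succ_def split: if_splits)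
  then show "p' < q'" using assms nth_eq_iff_index_eq by (metis order.strict_trans)
qed

lemma unbr_drop_skip:
  assumes "p \<le> p'" and "p' \<le> length w" and "\<forall>q. p \<le> q \<and> q < p' \<longrightarrow> w ! q \<noteq> i \<and> w ! q \<noteq> Suc i"
  shows "unbr i k p (drop p w) = unbr i k p' (drop p' w)"
  using assms
proof (induction "p' - p" arbitrary: p)
  case 0
  then show ?case by simp
next
  case (Suc d)
  then have "p < length w" and "p < p'" by auto
  then have "unbr i k p (drop p w) = unbr i k (Suc p) (drop (Suc p) w)"
    using Suc.prems by (simp add: Cons_nth_drop_Suc[symmetric])
  also have "\<dots> = unbr i k p' (drop p' w)"
    using Suc by (intro Suc.hyps) auto
  finally show ?case .
qed

lemma unbr_drop_Suc:
  "p < length w \<Longrightarrow> unbr i k p (drop p w) =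
     (if w ! p = Suc i then unbr i (Suc k) (Suc p) (drop (Suc p) w)
      else if w ! p = i then (if 0 < k then unbr i (k - 1) (Suc p) (drop (Suc p) w)
                              else p # unbr i k (Suc p) (drop (Suc p) w))
      else unbr i k (Suc p) (drop (Suc p) w))"
  by (simp add: Cons_nth_drop_Suc[symmetric])

lemma f_word_pattern_x_Sx_x:
  assumes "q1 < q3" and "q3 < q2" and "q2 < length w"
    and letters: "\<forall>q<length w. (w ! q = x \<longleftrightarrow> q = q1 \<or> q = q2) \<and> (w ! q = Suc x \<longleftrightarrow> q = q3)"
  shows "f_word x w = Some (w[q1 := Suc x])"
proof -
  have skip: "unbr x k p (drop p w) = unbr x k p' (drop p' w)"
    if "p \<le> p'" "p' \<le> length w" "\<forall>q. p \<le> q \<and> q < p' \<longrightarrow> q \<noteq> q1 \<and> q \<noteq> q2 \<and> q \<noteq> q3" for k p p'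
    using that letters by (intro unbr_drop_skip) auto
  have letter: "w ! q1 = x" "w ! q2 = x" "w ! q3 = Suc x" using assms by auto
  have "unbr x 0 0 w = unbr x 0 q1 (drop q1 w)" using assms skip[of 0 q1] by simp
  also have "\<dots> = q1 # unbr x 0 (Suc q1) (drop (Suc q1) w)"
    using assms letter by (subst unbr_drop_Suc) auto
  also have "unbr x 0 (Suc q1) (drop (Suc q1) w) = unbr x 0 q3 (drop q3 w)"
    using assms by (intro skip) auto
  also have "\<dots> = unbr x 1 (Suc q3) (drop (Suc q3) w)"
    using assms letter by (subst unbr_drop_Suc) auto
  also have "\<dots> = unbr x 1 q2 (drop q2 w)"
    using assms by (intro skip) auto
  also have "\<dots> = unbr x 0 (Suc q2) (drop (Suc q2) w)"
    using assms letter by (subst unbr_drop_Suc) auto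
  also have "\<dots> = unbr x 0 (length w) (drop (length w) w)"
    using assms by (intro skip) auto
  finally have "unbr x 0 0 w = [q1]" by simp
  then show ?thesis by (simp add: f_word_def)
qed

lemma f_word_pattern_Sx_x_x:
  assumes "q3 < q1" and "q1 < q2" and "q2 < length w"
    and letters: "\<forall>q<length w. (w ! q = x \<longleftrightarrow> q = q1 \<or> q = q2) \<and> (w ! q = Suc x \<longleftrightarrow> q = q3)"
  shows "f_word x w = Some (w[q2 := Suc x])"
proof -
  have skip: "unbr x k p (drop p w) = unbr x k p' (drop p' w)"
    if "p \<le> p'" "p' \<le> length w" "\<forall>q. p \<le> q \<and> q < p' \<longrightarrow> q \<noteq> q1 \<and> q \<noteq> q2 \<and> q \<noteq> q3" for k p p'
    using that letters by (intro unbr_drop_skip) auto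
  have letter: "w ! q1 = x" "w ! q2 = x" "w ! q3 = Suc x" using assms by auto
  have "unbr x 0 0 w = unbr x 0 q3 (drop q3 w)" using assms skip[of 0 q3] by simp
  also have "\<dots> = unbr x 1 (Suc q3) (drop (Suc q3) w)"
    using assms letter by (subst unbr_drop_Suc) auto
  also have "\<dots> = unbr x 1 q1 (drop q1 w)"
    using assms by (intro skip) auto
  also have "\<dots> = unbr x 0 (Suc q1) (drop (Suc q1) w)"
    using assms letter by (subst unbr_drop_Suc) auto
  also have "\<dots> = unbr x 0 q2 (drop q2 w)"
    using assms by (intro skip) auto
  also have "\<dots> = q2 # unbr x 0 (Suc q2) (drop (Suc q2) w)"
    using assms letter by (subst unbr_drop_Suc) auto
  also have "unbr x 0 (Suc q2) (drop (Suc q2) w) = unbr x 0 (length w) (drop (length w) w)"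
    using assms by (intro skip) auto
  finally have "unbr x 0 0 w = [q2]" by simp
  then show ?thesis by (simp add: f_word_def)
qed

lemma swap_vals_nth [simp]:
  "q < length w \<Longrightarrow> swap_vals x y w ! q = (if w ! q = x then y else if w ! q = y then x else w ! q)"
  by (simp add: swap_vals_def)

lemma length_swap_vals [simp]: "length (swap_vals x y w) = length w"
  by (simp add: swap_vals_def)

lemma swap_vals_swap_vals [simp]: "swap_vals x y (swap_vals x y w) = w"
  by (induction w) (auto simp: swap_vals_def)

lemma distinct_letter_positions:
  assumes "distinct w" and "p0 < length w" "p1 < length w" "p2 < length w"
    and "w ! p0 = x" "w ! p1 = y" "w ! p2 = z"
  shows "\<forall>q<length w. (w ! q = x \<longleftrightarrow> q = p0) \<and> (w ! q = y \<longleftrightarrow> q = p1) \<and> (w ! q = z \<longleftrightarrow> q = p2)"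
proof (intro allI impI)
  fix q assume "q < length w"
  then have "w ! q = w ! p \<longleftrightarrow> q = p" if "p < length w" for p
    using assms(1) that by (simp add: nth_eq_iff_index_eq)
  then show "(w ! q = x \<longleftrightarrow> q = p0) \<and> (w ! q = y \<longleftrightarrow> q = p1) \<and> (w ! q = z \<longleftrightarrow> q = p2)"
    using assms(2-) by metis
qed

lemma merge_succ_letter_positions:
  assumes "\<forall>q<length w. (w ! q = a \<longleftrightarrow> q = p0) \<and> (w ! q = Suc a \<longleftrightarrow> q = p1)
      \<and> (w ! q = Suc (Suc a) \<longleftrightarrow> q = p2)"
  shows "\<forall>q<length (map (merge_succ a) w). (map (merge_succ a) w ! q = a \<longleftrightarrow> q = p0 \<or> q = p1)
      \<and> (map (merge_succ a) w ! q = Suc a \<longleftrightarrow> q = p2)"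
proof (intro allI impI)
  fix q assume "q < length (map (merge_succ a) w)"
  then show "(map (merge_succ a) w ! q = a \<longleftrightarrow> q = p0 \<or> q = p1)
      \<and> (map (merge_succ a) w ! q = Suc a \<longleftrightarrow> q = p2)"
    using assms[rule_format, of q] by simp
qed

lemma f_word_merge_succ_swap_low:
  assumes "p0 < p2" "p2 < p1" "p1 < length w"
    and letters: "\<forall>q<length w. (w ! q = a \<longleftrightarrow> q = p0) \<and> (w ! q = Suc a \<longleftrightarrow> q = p1)
      \<and> (w ! q = Suc (Suc a) \<longleftrightarrow> q = p2)"
  shows "f_word a (map (merge_succ a) w) = Some (map (merge_succ (Suc a)) (swap_vals a (Suc a) w))"
proof -
  have "f_word a (map (merge_succ a) w) = Some ((map (merge_succ a) w)[p0 := Suc a])"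
    using f_word_pattern_x_Sx_x[OF _ _ _ merge_succ_letter_positions[OF letters]] assms(1-3) by simp
  also have "(map (merge_succ a) w)[p0 := Suc a] = map (merge_succ (Suc a)) (swap_vals a (Suc a) w)"
  proof (rule nth_equalityI)
    fix q assume "q < length ((map (merge_succ a) w)[p0 := Suc a])"
    then have q: "q < length w" by simp
    show "(map (merge_succ a) w)[p0 := Suc a] ! q = map (merge_succ (Suc a)) (swap_vals a (Suc a) w) ! q"
      using q letters[rule_format, OF q] assms(1,2) by (auto simp: nth_list_update merge_succ_def)
  qed simp
  finally show ?thesis .
qed

lemma f_word_merge_succ_swap_high:
  assumes "p2 < p0" "p0 < p1" "p1 < length w"
    and letters: "\<forall>q<length w. (w ! q = a \<longleftrightarrow> q = p0) \<and> (w ! q = Suc a \<longleftrightarrow> q = p1)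
      \<and> (w ! q = Suc (Suc a) \<longleftrightarrow> q = p2)"
  shows "f_word a (map (merge_succ a) w) =
    Some (map (merge_succ (Suc a)) (swap_vals (Suc a) (Suc (Suc a)) w))"
proof -
  have "f_word a (map (merge_succ a) w) = Some ((map (merge_succ a) w)[p1 := Suc a])"
    using f_word_pattern_Sx_x_x[OF _ _ _ merge_succ_letter_positions[OF letters]] assms(1-3) by simp
  also have "(map (merge_succ a) w)[p1 := Suc a] =
      map (merge_succ (Suc a)) (swap_vals (Suc a) (Suc (Suc a)) w)"
  proof (rule nth_equalityI)
    fix q assume "q < length ((map (merge_succ a) w)[p1 := Suc a])"
    then have q: "q < length w" by simp
    show "(map (merge_succ a) w)[p1 := Suc a] ! q =
        map (merge_succ (Suc a)) (swap_vals (Suc a) (Suc (Suc a)) w) ! q"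
      using q letters[rule_format, OF q] assms(1,2) by (auto simp: nth_list_update merge_succ_def)
  qed simp
  finally show ?thesis .
qed

lemma CS_edge_of_merge_succ:
  assumes la: "is_partition la" and n: "psize la \<le> n" and S: "is_SYT la S" and S': "is_SYT la S'"
    and "S \<noteq> S'" and a: "1 \<le> a" "a < n"
    and ties: "ties_in_order (merge_succ a) (row_word S)"
    and ties': "ties_in_order (merge_succ (Suc a)) (row_word S')"
    and f: "f_word a (map (merge_succ a) (row_word S)) = Some (map (merge_succ (Suc a)) (row_word S'))"
  shows "CS_edge la n S S'"
proof -
  have "map (map (merge_succ a)) S \<in> Q_set la n S"
    using la S mono_merge_succ merge_succ_image_atLeastAtMost[OF a(1) n] ties
    by (rule map_map_in_Q_set)
  moreover have "map (map (merge_succ (Suc a))) S' \<in> Q_set la n S'"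
    using la S' mono_merge_succ merge_succ_image_atLeastAtMost[of "Suc a", OF _ n] ties'
    by (rule map_map_in_Q_set) simp
  moreover have "crystal_f n a (map (map (merge_succ a)) S) (map (map (merge_succ (Suc a))) S')"
    using a f by (simp add: crystal_f_def row_word_map_map)
  ultimately show ?thesis
    using S S' \<open>S \<noteq> S'\<close> unfolding CS_edge_def by blast
qed

lemma CS_edge_of_swap_low:
  assumes la: "is_partition la" and n: "psize la \<le> n" and S: "is_SYT la S" and S': "is_SYT la S'"
    and a: "1 \<le> a" and pos: "p0 < p2" "p2 < p1" "p1 < length (row_word S)"
    and letters: "row_word S ! p0 = a" "row_word S ! p1 = Suc a" "row_word S ! p2 = Suc (Suc a)"
    and swap: "row_word S' = swap_vals a (Suc a) (row_word S)"
  shows "CS_edge la n S S'"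
proof (rule CS_edge_of_merge_succ[OF la n S S' _ a])
  note w = SYT_row_word[OF S]
  have "Suc (Suc a) \<in> {1..psize la}"
    using w(2) letters(3) pos nth_mem[of p2 "row_word S"] by simp
  then show "a < n" using n by simp
  have w'_p0: "row_word S' ! p0 = Suc a" and w'_p2: "row_word S' ! p2 = Suc (Suc a)"
    using pos letters unfolding swap by simp_all
  show "S \<noteq> S'" using w'_p0 letters(1) by auto
  show "ties_in_order (merge_succ (Suc a)) (row_word S')"
    using SYT_row_word(1)[OF S'] pos w'_p0 w'_p2
    by (intro ties_in_order_merge_succ[of _ p0 p2]) (simp_all add: swap)
  show "ties_in_order (merge_succ a) (row_word S)"
    using w(1) pos letters by (intro ties_in_order_merge_succ[of _ p0 p1]) simp_all
  show "f_word a (map (merge_succ a) (row_word S)) = Some (map (merge_succ (Suc a)) (row_word S'))"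
    using f_word_merge_succ_swap_low[OF pos distinct_letter_positions[OF w(1) _ _ _ letters]] pos
    unfolding swap by simp
qed

lemma CS_edge_of_swap_high:
  assumes la: "is_partition la" and n: "psize la \<le> n" and S: "is_SYT la S" and S': "is_SYT la S'"
    and a: "1 \<le> a" and pos: "p2 < p0" "p0 < p1" "p1 < length (row_word S)"
    and letters: "row_word S ! p0 = a" "row_word S ! p1 = Suc a" "row_word S ! p2 = Suc (Suc a)"
    and swap: "row_word S' = swap_vals (Suc a) (Suc (Suc a)) (row_word S)"
  shows "CS_edge la n S S'"
proof (rule CS_edge_of_merge_succ[OF la n S S' _ a])
  note w = SYT_row_word[OF S]
  have "Suc (Suc a) \<in> {1..psize la}"
    using w(2) letters(3) pos nth_mem[of p2 "row_word S"] by simp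
  then show "a < n" using n by simp
  have w'_p2: "row_word S' ! p2 = Suc a" and w'_p1: "row_word S' ! p1 = Suc (Suc a)"
    using pos letters unfolding swap by simp_all
  show "S \<noteq> S'" using w'_p1 letters(2) by auto
  show "ties_in_order (merge_succ (Suc a)) (row_word S')"
    using SYT_row_word(1)[OF S'] pos w'_p2 w'_p1
    by (intro ties_in_order_merge_succ[of _ p2 p1]) (simp_all add: swap)
  show "ties_in_order (merge_succ a) (row_word S)"
    using w(1) pos letters by (intro ties_in_order_merge_succ[of _ p0 p1]) simp_all
  show "f_word a (map (merge_succ a) (row_word S)) = Some (map (merge_succ (Suc a)) (row_word S'))"
    using f_word_merge_succ_swap_high[OF pos distinct_letter_positions[OF w(1) _ _ _ letters]] pos
    unfolding swap by simp
qed

lemma pos_of_nth: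
  assumes "x \<in> set w"
  shows "pos_of w x < length w" and "w ! pos_of w x = x"
proof -
  have "\<exists>p. p < length w \<and> w ! p = x" using assms by (simp add: in_set_conv_nth)
  then have "pos_of w x < length w \<and> w ! pos_of w x = x"
    unfolding pos_of_def by (rule LeastI_ex)
  then show "pos_of w x < length w" and "w ! pos_of w x = x" by simp_all
qed

lemma CS_edge_either_of_swap_low:
  assumes la: "is_partition la" and n: "psize la \<le> n" and T: "is_SYT la T" and T': "is_SYT la T'"
    and a: "1 \<le> a" and pos: "pa < length (row_word T)" "pb < length (row_word T)" "pc < length (row_word T)"
    and letters: "row_word T ! pa = a" "row_word T ! pb = Suc a" "row_word T ! pc = Suc (Suc a)"
    and "between pb pc pa" and swap: "row_word T' = swap_vals a (Suc a) (row_word T)"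
  shows "CS_edge la n T T' \<or> CS_edge la n T' T"
proof -
  have swap': "row_word T = swap_vals a (Suc a) (row_word T')" and pos': "pa < length (row_word T')"
    and letters': "row_word T' ! pb = a" "row_word T' ! pa = Suc a" "row_word T' ! pc = Suc (Suc a)"
    using swap pos letters by simp_all
  from \<open>between pb pc pa\<close> consider "pa < pc" "pc < pb" | "pb < pc" "pc < pa"
    by (auto simp: between_def)
  then show ?thesis
  proof cases
    case 1
    with CS_edge_of_swap_low[OF la n T T' a _ _ pos(2) letters swap] show ?thesis by blast
  next
    case 2
    with CS_edge_of_swap_low[OF la n T' T a _ _ pos' letters' swap'] show ?thesis by blast
  qed
qed

lemma CS_edge_either_of_swap_high:
  assumes la: "is_partition la" and n: "psize la \<le> n" and T: "is_SYT la T" and T': "is_SYT la T'"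
    and a: "1 \<le> a" and pos: "pa < length (row_word T)" "pb < length (row_word T)" "pc < length (row_word T)"
    and letters: "row_word T ! pa = a" "row_word T ! pb = Suc a" "row_word T ! pc = Suc (Suc a)"
    and "between pb pa pc" and swap: "row_word T' = swap_vals (Suc a) (Suc (Suc a)) (row_word T)"
  shows "CS_edge la n T T' \<or> CS_edge la n T' T"
proof -
  have swap': "row_word T = swap_vals (Suc a) (Suc (Suc a)) (row_word T')"
    and pos': "pc < length (row_word T')"
    and letters': "row_word T' ! pa = a" "row_word T' ! pc = Suc a" "row_word T' ! pb = Suc (Suc a)"
    using swap pos letters by simp_all
  from \<open>between pb pa pc\<close> consider "pc < pa" "pa < pb" | "pb < pa" "pa < pc"
    by (auto simp: between_def)
  then show ?thesis
  proof cases
    case 1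
    with CS_edge_of_swap_high[OF la n T T' a _ _ pos(2) letters swap] show ?thesis by blast
  next
    case 2
    with CS_edge_of_swap_high[OF la n T' T a _ _ pos' letters' swap'] show ?thesis by blast
  qed
qed

lemma CS_edge_either_of_D_word:
  assumes la: "is_partition la" and n: "psize la \<le> n" and T: "is_SYT la T" and T': "is_SYT la T'"
    and i: "1 < i" "i < psize la" and D: "D_word i (row_word T) = Some (row_word T')"
  shows "CS_edge la n T T' \<or> CS_edge la n T' T"
proof -
  obtain a where i_eq: "i = Suc a" and a: "1 \<le> a" using i(1) by (cases i) auto
  let ?w = "row_word T"
  define pa pb pc where "pa = pos_of ?w a" and "pb = pos_of ?w (Suc a)" and "pc = pos_of ?w (Suc (Suc a))"
  have "a \<in> set ?w" "Suc a \<in> set ?w" "Suc (Suc a) \<in> set ?w"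
    using SYT_row_word(2)[OF T] i a unfolding i_eq by auto
  then have pos: "pa < length ?w" "pb < length ?w" "pc < length ?w"
    and letters: "?w ! pa = a" "?w ! pb = Suc a" "?w ! pc = Suc (Suc a)"
    unfolding pa_def pb_def pc_def by (simp_all add: pos_of_nth)
  consider (low) "between pb pc pa" "row_word T' = swap_vals a (Suc a) ?w"
    | (high) "between pb pa pc" "row_word T' = swap_vals (Suc a) (Suc (Suc a)) ?w"
    using D unfolding D_word_def Let_def i_eq pa_def pb_def pc_def by (auto split: if_splits)
  then show ?thesis
  proof cases
    case low
    then show ?thesis by (rule CS_edge_either_of_swap_low[OF la n T T' a pos letters])
  next
    case high
    then show ?thesis by (rule CS_edge_either_of_swap_high[OF la n T T' a pos letters])
  qed
qed

theorem theorem4p1: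
  fixes la :: "nat list" and n :: nat
  assumes "is_partition la" and "psize la \<le> n"
  shows "\<forall>T T'. DE_edge la T T' \<longrightarrow> CS_edge la n T T' \<or> CS_edge la n T' T"
  using CS_edge_either_of_D_word[OF assms] unfolding DE_edge_def by blast

end
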